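(* Let $(G,\preceq)$ be a nontrivial left-ordered group whose Conradian soul is trivial. Then $\preceq$ is an accumulation point, in $\mathcal{LO}(G)$, of the set of its conjugates $\{\preceq_h: h\in G\}$.
   Context: A left-ordering is a total order invariant under left multiplication; it is Conradian if for all $f\succ id$, $g\succ id$ there is $n\in\mathbb{N}$ with $fg^n\succ g$. The Conradian soul of $(G,\preceq)$ is the maximal $\preceq$-convex subgroup (convex: $f_1\prec h\prec f_2$, $f_i$ in it, implies $h$ in it) on which $\preceq$ restricts to a Conradian ordering. The conjugate $\preceq_h$ is defined by $g\succ_h id$ iff $hgh^{-1}\succ id$. $\mathcal{LO}(G)$ is the space of left-orderings with the topology in which basic neighbourhoods of $\preceq$ are the sets of left-orderings agreeing with $\preceq$ on a given finite subset of $G$. *)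

theory Defs
  imports "HOL-Algebra.Group"
begin

definition left_ordering :: "('a, 'b) monoid_scheme \<Rightarrow> ('a \<Rightarrow> 'a \<Rightarrow> bool) \<Rightarrow> bool" where
  "left_ordering G lo \<longleftrightarrow>
     (\<forall>a b. lo a b \<longrightarrow> a \<in> carrier G \<and> b \<in> carrier G) \<and>
     (\<forall>a\<in>carrier G. lo a a) \<and>
     (\<forall>a\<in>carrier G. \<forall>b\<in>carrier G. lo a b \<and> lo b a \<longrightarrow> a = b) \<and>
     (\<forall>a\<in>carrier G. \<forall>b\<in>carrier G. \<forall>c\<in>carrier G. lo a b \<and> lo b c \<longrightarrow> lo a c) \<and>
     (\<forall>a\<in>carrier G. \<forall>b\<in>carrier G. lo a b \<or> lo b a) \<and>
     (\<forall>h\<in>carrier G. \<forall>a\<in>carrier G. \<forall>b\<in>carrier G. lo a b \<longrightarrow> lo (h \<otimes>\<^bsub>G\<^esub> a) (h \<otimes>\<^bsub>G\<^esub> b))"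

definition strict :: "('a \<Rightarrow> 'a \<Rightarrow> bool) \<Rightarrow> 'a \<Rightarrow> 'a \<Rightarrow> bool" where
  "strict lo a b \<longleftrightarrow> lo a b \<and> a \<noteq> b"

definition convex_subgroup :: "('a, 'b) monoid_scheme \<Rightarrow> ('a \<Rightarrow> 'a \<Rightarrow> bool) \<Rightarrow> 'a set \<Rightarrow> bool" where
  "convex_subgroup G lo H \<longleftrightarrow> subgroup H G \<and>
     (\<forall>f1\<in>H. \<forall>f2\<in>H. \<forall>h\<in>carrier G. strict lo f1 h \<and> strict lo h f2 \<longrightarrow> h \<in> H)"

definition conradian_on :: "('a, 'b) monoid_scheme \<Rightarrow> ('a \<Rightarrow> 'a \<Rightarrow> bool) \<Rightarrow> 'a set \<Rightarrow> bool" where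
  "conradian_on G lo H \<longleftrightarrow>
     (\<forall>f\<in>H. \<forall>g\<in>H. strict lo \<one>\<^bsub>G\<^esub> f \<and> strict lo \<one>\<^bsub>G\<^esub> g \<longrightarrow>
        (\<exists>n::nat. strict lo g (f \<otimes>\<^bsub>G\<^esub> (g [^]\<^bsub>G\<^esub> n))))"

definition is_conradian_soul :: "('a, 'b) monoid_scheme \<Rightarrow> ('a \<Rightarrow> 'a \<Rightarrow> bool) \<Rightarrow> 'a set \<Rightarrow> bool" where
  "is_conradian_soul G lo C \<longleftrightarrow>
     convex_subgroup G lo C \<and> conradian_on G lo C \<and>
     (\<forall>H. convex_subgroup G lo H \<and> conradian_on G lo H \<longrightarrow> H \<subseteq> C)"

text \<open>Conjugate ordering: g >_h id iff h g h^{-1} > id; extended by left invariance,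
  a <=_h b iff id <=_h a^{-1} b.\<close>
definition conj_ord :: "('a, 'b) monoid_scheme \<Rightarrow> ('a \<Rightarrow> 'a \<Rightarrow> bool) \<Rightarrow> 'a \<Rightarrow> 'a \<Rightarrow> 'a \<Rightarrow> bool" where
  "conj_ord G lo h a b \<longleftrightarrow> a \<in> carrier G \<and> b \<in> carrier G \<and>
     lo \<one>\<^bsub>G\<^esub> (h \<otimes>\<^bsub>G\<^esub> (inv\<^bsub>G\<^esub> a \<otimes>\<^bsub>G\<^esub> b) \<otimes>\<^bsub>G\<^esub> inv\<^bsub>G\<^esub> h)"

definition agree_on :: "'a set \<Rightarrow> ('a \<Rightarrow> 'a \<Rightarrow> bool) \<Rightarrow> ('a \<Rightarrow> 'a \<Rightarrow> bool) \<Rightarrow> bool" where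
  "agree_on F lo1 lo2 \<longleftrightarrow> (\<forall>a\<in>F. \<forall>b\<in>F. lo1 a b \<longleftrightarrow> lo2 a b)"

text \<open>lo is an accumulation point in LO(G) of the set S of left-orderings: every basic
  neighbourhood (orderings agreeing with lo on a finite subset of G) contains an element
  of S different from lo.\<close>
definition accumulation_point :: "('a, 'b) monoid_scheme \<Rightarrow> ('a \<Rightarrow> 'a \<Rightarrow> bool) \<Rightarrow> ('a \<Rightarrow> 'a \<Rightarrow> bool) set \<Rightarrow> bool" where
  "accumulation_point G lo S \<longleftrightarrow>
     (\<forall>F. finite F \<and> F \<subseteq> carrier G \<longrightarrow> (\<exists>lo'\<in>S. lo' \<noteq> lo \<and> agree_on F lo lo'))"

end

theory Submission
  imports Defs
begin

text \<open>
  Call \<open>x\<close> right invariant if \<open>a \<preceq> b \<longleftrightarrow> a x \<preceq> b x\<close> for all \<open>a, b\<close>; these elements form a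
  subgroup, and \<open>\<preceq>\<^sub>h = \<preceq>\<close> holds exactly when \<open>h\<^sup>-\<^sup>1\<close> is right invariant.
  If every element of an interval \<open>[1, m]\<close> with \<open>m \<succ> 1\<close> were right invariant, the union of all
  symmetric intervals \<open>[c\<^sup>-\<^sup>1, c]\<close> consisting of right invariant elements would be a convex
  subgroup containing \<open>m\<close> on which \<open>\<preceq>\<close> is bi-invariant, hence Conradian, contradicting the
  triviality of the Conradian soul. So arbitrarily small positive elements \<open>x\<close> fail to be right
  invariant. Given a finite set \<open>F\<close>, choose such an \<open>x\<close> below every positive \<open>a\<^sup>-\<^sup>1 b\<close> with
  \<open>a, b \<in> F\<close>; then \<open>\<preceq>\<^bsub>x\<^sup>-\<^sup>1\<^esub>\<close> differs from \<open>\<preceq>\<close> but agrees with it on \<open>F\<close>, because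
  \<open>a \<preceq>\<^bsub>x\<^sup>-\<^sup>1\<^esub> b\<close> means \<open>x \<preceq> a\<^sup>-\<^sup>1 b x\<close>.
\<close>

locale left_ordered_group = group G for G (structure) +
  fixes lo :: "'a \<Rightarrow> 'a \<Rightarrow> bool"
  assumes left_ordering: "left_ordering G lo"
begin

lemma lo_carrier: "lo a b \<Longrightarrow> a \<in> carrier G \<and> b \<in> carrier G"
  using left_ordering unfolding left_ordering_def by (elim conjE) blast

lemma lo_refl: "a \<in> carrier G \<Longrightarrow> lo a a"
  using left_ordering unfolding left_ordering_def by (elim conjE) blast

lemma lo_antisym: "lo a b \<Longrightarrow> lo b a \<Longrightarrow> a = b"
  using left_ordering lo_carrier[of a b] unfolding left_ordering_def by (elim conjE) blast

lemma lo_total: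
  assumes "a \<in> carrier G" "b \<in> carrier G"
  shows "lo a b \<or> lo b a"
proof -
  have "\<forall>a\<in>carrier G. \<forall>b\<in>carrier G. lo a b \<or> lo b a"
    using left_ordering unfolding left_ordering_def by (elim conjE)
  with assms show ?thesis by blast
qed

lemma lo_trans [trans]:
  assumes "lo a b" "lo b c"
  shows "lo a c"
proof -
  have "\<forall>a\<in>carrier G. \<forall>b\<in>carrier G. \<forall>c\<in>carrier G. lo a b \<and> lo b c \<longrightarrow> lo a c"
    using left_ordering unfolding left_ordering_def by (elim conjE)
  with assms lo_carrier[OF assms(1)] lo_carrier[OF assms(2)] show ?thesis by blast
qed

lemma lo_mult_left:
  assumes "lo a b" "h \<in> carrier G"
  shows "lo (h \<otimes> a) (h \<otimes> b)"
proof -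
  have "\<forall>h\<in>carrier G. \<forall>a\<in>carrier G. \<forall>b\<in>carrier G. lo a b \<longrightarrow> lo (h \<otimes> a) (h \<otimes> b)"
    using left_ordering unfolding left_ordering_def by (elim conjE)
  with assms lo_carrier[OF assms(1)] show ?thesis by blast
qed

lemma inv_mult_cancel_left [simp]: "h \<in> carrier G \<Longrightarrow> a \<in> carrier G \<Longrightarrow> inv h \<otimes> (h \<otimes> a) = a"
  by (simp add: m_assoc[symmetric])

lemma mult_inv_cancel_left [simp]: "h \<in> carrier G \<Longrightarrow> a \<in> carrier G \<Longrightarrow> h \<otimes> (inv h \<otimes> a) = a"
  by (simp add: m_assoc[symmetric])

lemma mult_inv_cancel_right [simp]: "h \<in> carrier G \<Longrightarrow> a \<in> carrier G \<Longrightarrow> a \<otimes> h \<otimes> inv h = a"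
  by (simp add: m_assoc)

lemma inv_mult_cancel_right [simp]: "h \<in> carrier G \<Longrightarrow> a \<in> carrier G \<Longrightarrow> a \<otimes> inv h \<otimes> h = a"
  by (simp add: m_assoc)

lemma lo_mult_left_iff:
  assumes "h \<in> carrier G" "a \<in> carrier G" "b \<in> carrier G"
  shows "lo (h \<otimes> a) (h \<otimes> b) \<longleftrightarrow> lo a b"
  using lo_mult_left[of "h \<otimes> a" "h \<otimes> b" "inv h"] lo_mult_left[of a b h] assms by auto

lemma lo_iff_one_le_inv_mult:
  "a \<in> carrier G \<Longrightarrow> b \<in> carrier G \<Longrightarrow> lo a b \<longleftrightarrow> lo \<one> (inv a \<otimes> b)"
  using lo_mult_left_iff[of "inv a" a b] by simp

lemma one_le_iff_inv_le_one: "a \<in> carrier G \<Longrightarrow> lo \<one> a \<longleftrightarrow> lo (inv a) \<one>"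
  using lo_mult_left_iff[of "inv a" \<one> a] by simp

lemma lo_strict_iff: "strict lo a b \<longleftrightarrow> lo a b \<and> \<not> lo b a"
  unfolding strict_def using lo_antisym lo_carrier lo_refl by blast

subsection \<open>Right invariant elements\<close>

definition right_invariant :: "'a set" where
  "right_invariant =
     {x \<in> carrier G. \<forall>a\<in>carrier G. \<forall>b\<in>carrier G. lo (a \<otimes> x) (b \<otimes> x) \<longleftrightarrow> lo a b}"

lemma right_invariantD:
  "x \<in> right_invariant \<Longrightarrow> a \<in> carrier G \<Longrightarrow> b \<in> carrier G \<Longrightarrow> lo (a \<otimes> x) (b \<otimes> x) \<longleftrightarrow> lo a b"
  unfolding right_invariant_def by blast

lemma right_invariant_carrier: "x \<in> right_invariant \<Longrightarrow> x \<in> carrier G"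
  unfolding right_invariant_def by blast

lemma subgroup_right_invariant: "subgroup right_invariant G"
proof (rule subgroupI)
  show "right_invariant \<subseteq> carrier G"
    using right_invariant_carrier by blast
  show "right_invariant \<noteq> {}"
    unfolding right_invariant_def by force
next
  fix x assume x: "x \<in> right_invariant"
  then have xc: "x \<in> carrier G" by (rule right_invariant_carrier)
  have "lo (a \<otimes> inv x) (b \<otimes> inv x) \<longleftrightarrow> lo a b" if "a \<in> carrier G" "b \<in> carrier G" for a b
    using right_invariantD[OF x, of "a \<otimes> inv x" "b \<otimes> inv x"] xc that by simp
  with xc show "inv x \<in> right_invariant"
    unfolding right_invariant_def by simp
next
  fix x y assume x: "x \<in> right_invariant" and y: "y \<in> right_invariant"
  then have "x \<in> carrier G" "y \<in> carrier G" by (auto intro: right_invariant_carrier)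
  with right_invariantD[OF x] right_invariantD[OF y] show "x \<otimes> y \<in> right_invariant"
    unfolding right_invariant_def by (simp add: m_assoc[symmetric])
qed

lemma right_invariant_inv_antimono:
  assumes a: "a \<in> right_invariant" and ab: "lo a b"
  shows "lo (inv b) (inv a)"
proof -
  have c: "a \<in> carrier G" "b \<in> carrier G" using ab lo_carrier by auto
  have "lo (inv b \<otimes> a) \<one>"
    using lo_mult_left[OF ab, of "inv b"] c by simp
  then show ?thesis
    using right_invariantD[OF subgroup.m_inv_closed[OF subgroup_right_invariant a],
        of "inv b \<otimes> a" \<one>] c by simp
qed

lemma conradian_on_right_invariant:
  assumes "H \<subseteq> right_invariant"
  shows "conradian_on G lo H"
  unfolding conradian_on_def
proof (intro ballI impI exI)
  fix f g assume f: "f \<in> H" and g: "g \<in> H" and pos: "strict lo \<one> f \<and> strict lo \<one> g"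
  have c: "f \<in> carrier G" "g \<in> carrier G"
    using f g assms right_invariant_carrier by auto
  have "lo g (f \<otimes> g)"
    using right_invariantD[of g \<one> f] g assms pos c unfolding strict_def by auto
  moreover have "g \<noteq> f \<otimes> g" using pos c unfolding strict_def by auto
  ultimately show "strict lo g (f \<otimes> g [^] (1::nat))"
    using c unfolding strict_def by simp
qed

lemma conj_ord_inv_iff:
  assumes "x \<in> carrier G" "a \<in> carrier G" "b \<in> carrier G"
  shows "conj_ord G lo (inv x) a b \<longleftrightarrow> lo x (inv a \<otimes> b \<otimes> x)"
  using lo_iff_one_le_inv_mult[of x "inv a \<otimes> b \<otimes> x"] assms
  unfolding conj_ord_def by (simp add: m_assoc)

lemma conj_ord_inv_eq_imp_right_invariant:
  assumes x: "x \<in> carrier G" and eq: "conj_ord G lo (inv x) = lo"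
  shows "x \<in> right_invariant"
  unfolding right_invariant_def
proof (intro CollectI conjI ballI x)
  fix a b assume c: "a \<in> carrier G" "b \<in> carrier G"
  have "lo (a \<otimes> x) (b \<otimes> x) \<longleftrightarrow> lo x (inv a \<otimes> b \<otimes> x)"
    using lo_iff_one_le_inv_mult[of "a \<otimes> x" "b \<otimes> x"] lo_iff_one_le_inv_mult[of x "inv a \<otimes> b \<otimes> x"]
      x c by (simp add: inv_mult_group m_assoc)
  also have "\<dots> \<longleftrightarrow> lo a b"
    using conj_ord_inv_iff[OF x c] eq by simp
  finally show "lo (a \<otimes> x) (b \<otimes> x) \<longleftrightarrow> lo a b" .
qed

subsection \<open>A bi-invariant convex subgroup\<close>

definition sym_interval :: "'a \<Rightarrow> 'a set" where
  "sym_interval c = {y. lo (inv c) y \<and> lo y c}"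

definition invariant_radii :: "'a set" where
  "invariant_radii = {c \<in> carrier G. lo \<one> c \<and> sym_interval c \<subseteq> right_invariant}"

definition invariant_core :: "'a set" where
  "invariant_core = (\<Union>c\<in>invariant_radii. sym_interval c)"

lemma sym_interval_carrier: "y \<in> sym_interval c \<Longrightarrow> y \<in> carrier G"
  unfolding sym_interval_def using lo_carrier by blast

lemma one_self_mem_sym_interval:
  assumes "c \<in> carrier G" "lo \<one> c"
  shows "\<one> \<in> sym_interval c" "c \<in> sym_interval c"
  using assms one_le_iff_inv_le_one lo_trans lo_refl unfolding sym_interval_def by blast+

lemma sym_interval_square_cases:
  assumes c: "c \<in> carrier G" "lo \<one> c" and y: "y \<in> sym_interval (c \<otimes> c)"
  shows "y \<in> sym_interval c \<or> c \<otimes> y \<in> sym_interval c \<or> inv c \<otimes> y \<in> sym_interval c"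
proof -
  have yc: "y \<in> carrier G" using y sym_interval_carrier by blast
  have lower: "lo (inv c \<otimes> inv c) y" and upper: "lo y (c \<otimes> c)"
    using y c unfolding sym_interval_def by (auto simp: inv_mult_group)
  have ic: "lo (inv c) \<one>" using c one_le_iff_inv_le_one by blast
  consider "lo y (inv c)" | "lo c y" | "y \<in> sym_interval c"
    using lo_total[OF yc] c unfolding sym_interval_def by blast
  then show ?thesis
  proof cases
    case 1
    have "lo (inv c) (c \<otimes> y)" using lo_mult_left[OF lower, of c] c by (simp add: m_assoc[symmetric])
    moreover have "lo (c \<otimes> y) \<one>"
      using lo_mult_left[OF 1 c(1)] c by simp
    then have "lo (c \<otimes> y) c" using lo_trans c(2) by blast
    ultimately show ?thesis unfolding sym_interval_def by blast
  next
    case 2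
    have "lo \<one> (inv c \<otimes> y)"
      using lo_mult_left[OF 2 inv_closed[OF c(1)]] c by simp
    then have "lo (inv c) (inv c \<otimes> y)" using lo_trans ic by blast
    moreover have "lo (inv c \<otimes> y) c"
      using lo_mult_left[OF upper, of "inv c"] c by (simp add: m_assoc[symmetric])
    ultimately show ?thesis unfolding sym_interval_def by blast
  qed simp
qed

lemma invariant_radii_square:
  assumes c: "c \<in> invariant_radii"
  shows "c \<otimes> c \<in> invariant_radii"
proof -
  have c': "c \<in> carrier G" "lo \<one> c" and sub: "sym_interval c \<subseteq> right_invariant"
    using c unfolding invariant_radii_def by auto
  have cR: "c \<in> right_invariant" "inv c \<in> right_invariant"
    using sub one_self_mem_sym_interval[OF c'] subgroup.m_inv_closed[OF subgroup_right_invariant]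
    by auto
  have "lo c (c \<otimes> c)"
    using lo_mult_left[OF c'(2) c'(1)] c' by simp
  then have "lo \<one> (c \<otimes> c)" using lo_trans c'(2) by blast
  moreover have "y \<in> right_invariant" if y: "y \<in> sym_interval (c \<otimes> c)" for y
  proof -
    have yc: "y \<in> carrier G" using y sym_interval_carrier by blast
    from sym_interval_square_cases[OF c' y] show ?thesis
    proof (elim disjE)
      assume "c \<otimes> y \<in> sym_interval c"
      then have "inv c \<otimes> (c \<otimes> y) \<in> right_invariant"
        using sub cR subgroup.m_closed[OF subgroup_right_invariant] by blast
      then show ?thesis using c' yc by simp
    next
      assume "inv c \<otimes> y \<in> sym_interval c"
      then have "c \<otimes> (inv c \<otimes> y) \<in> right_invariant"
        using sub cR subgroup.m_closed[OF subgroup_right_invariant] by blast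
      then show ?thesis using c' yc by simp
    qed (use sub in blast)
  qed
  ultimately show ?thesis
    using c' unfolding invariant_radii_def by blast
qed

lemma invariant_radii_directed:
  assumes "c1 \<in> invariant_radii" "c2 \<in> invariant_radii"
  obtains c where "c \<in> invariant_radii" "sym_interval c1 \<subseteq> sym_interval c"
    "sym_interval c2 \<subseteq> sym_interval c"
proof -
  have widen: "sym_interval a \<subseteq> sym_interval b"
    if "a \<in> invariant_radii" "lo a b" for a b
  proof -
    have "a \<in> right_invariant"
      using that one_self_mem_sym_interval[of a] unfolding invariant_radii_def by blast
    then have "lo (inv b) (inv a)" using right_invariant_inv_antimono that by blast
    then show ?thesis using that lo_trans unfolding sym_interval_def by blast
  qed
  have "lo c1 c2 \<or> lo c2 c1"
    using assms lo_total unfolding invariant_radii_def by blast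
  then show ?thesis
    using that widen assms by blast
qed

lemma invariant_core_subset_right_invariant: "invariant_core \<subseteq> right_invariant"
  unfolding invariant_core_def invariant_radii_def by blast

lemma invariant_core_common_radius:
  assumes "g \<in> invariant_core" "h \<in> invariant_core"
  obtains c where "c \<in> invariant_radii" "g \<in> sym_interval c" "h \<in> sym_interval c"
proof -
  obtain c1 c2 where c1: "c1 \<in> invariant_radii" "g \<in> sym_interval c1"
    and c2: "c2 \<in> invariant_radii" "h \<in> sym_interval c2"
    using assms unfolding invariant_core_def by blast
  obtain c where "c \<in> invariant_radii" "sym_interval c1 \<subseteq> sym_interval c"
    "sym_interval c2 \<subseteq> sym_interval c"
    using invariant_radii_directed[OF c1(1) c2(1)] .
  with c1(2) c2(2) that show ?thesis by blast
qed

lemma subgroup_invariant_core: "subgroup invariant_core G"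
proof (rule subgroupI)
  show "invariant_core \<subseteq> carrier G"
    using invariant_core_subset_right_invariant right_invariant_carrier by blast
  have "\<one> \<in> invariant_radii"
    using lo_refl lo_antisym subgroup.one_closed[OF subgroup_right_invariant]
    unfolding invariant_radii_def sym_interval_def by auto
  then show "invariant_core \<noteq> {}"
    using one_self_mem_sym_interval unfolding invariant_core_def invariant_radii_def by blast
next
  fix g assume "g \<in> invariant_core"
  then obtain c where c: "c \<in> invariant_radii" "g \<in> sym_interval c"
    unfolding invariant_core_def by blast
  then have gR: "g \<in> right_invariant" and cR: "inv c \<in> right_invariant" and cc: "c \<in> carrier G"
    using one_self_mem_sym_interval[of c] subgroup.m_inv_closed[OF subgroup_right_invariant]
    unfolding invariant_radii_def by blast+
  have "lo (inv c) (inv g)" "lo (inv g) c"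
    using right_invariant_inv_antimono[OF gR] right_invariant_inv_antimono[OF cR] c(2) cc
    unfolding sym_interval_def by auto
  then show "inv g \<in> invariant_core"
    using c(1) unfolding invariant_core_def sym_interval_def by blast
next
  fix g h assume "g \<in> invariant_core" "h \<in> invariant_core"
  then obtain c where c: "c \<in> invariant_radii" "g \<in> sym_interval c" "h \<in> sym_interval c"
    by (rule invariant_core_common_radius)
  then have cc: "c \<in> carrier G" and hR: "h \<in> right_invariant"
    unfolding invariant_radii_def by blast+
  have gc: "g \<in> carrier G" using c(2) sym_interval_carrier by blast
  have g: "lo (inv c) g" "lo g c" and h: "lo (inv c) h" "lo h c"
    using c(2,3) unfolding sym_interval_def by auto
  have "lo (inv c \<otimes> inv c) (inv c \<otimes> h)"
    using lo_mult_left[OF h(1) inv_closed[OF cc]] .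
  also have "lo (inv c \<otimes> h) (g \<otimes> h)"
    using right_invariantD[OF hR _ gc] g(1) cc by simp
  finally have lower: "lo (inv (c \<otimes> c)) (g \<otimes> h)"
    using cc by (simp add: inv_mult_group)
  have "lo (g \<otimes> h) (c \<otimes> h)"
    using right_invariantD[OF hR gc cc] g(2) by simp
  also have "lo (c \<otimes> h) (c \<otimes> c)"
    using lo_mult_left[OF h(2) cc] .
  finally have "g \<otimes> h \<in> sym_interval (c \<otimes> c)"
    using lower unfolding sym_interval_def by blast
  then show "g \<otimes> h \<in> invariant_core"
    using invariant_radii_square[OF c(1)] unfolding invariant_core_def by blast
qed

lemma convex_subgroup_invariant_core: "convex_subgroup G lo invariant_core"
  unfolding convex_subgroup_def
proof (intro conjI subgroup_invariant_core ballI impI)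
  fix f1 f2 h assume f: "f1 \<in> invariant_core" "f2 \<in> invariant_core"
    and between: "strict lo f1 h \<and> strict lo h f2"
  obtain c where "c \<in> invariant_radii" "f1 \<in> sym_interval c" "f2 \<in> sym_interval c"
    using invariant_core_common_radius[OF f] .
  with between show "h \<in> invariant_core"
    using lo_trans unfolding invariant_core_def sym_interval_def strict_def by blast
qed

lemma mem_invariant_core_if_interval_right_invariant:
  assumes m: "m \<in> carrier G" "lo \<one> m"
    and interval: "\<And>x. lo \<one> x \<Longrightarrow> lo x m \<Longrightarrow> x \<in> right_invariant"
  shows "m \<in> invariant_core"
proof -
  have mR: "m \<in> right_invariant" using interval m lo_refl by blast
  have "y \<in> right_invariant" if y: "y \<in> sym_interval m" for y
  proof (cases "lo \<one> y")
    case True then show ?thesis using interval y unfolding sym_interval_def by blast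
  next
    case False
    have yc: "y \<in> carrier G" using y sym_interval_carrier by blast
    with False have "lo y \<one>" using lo_total by blast
    then have "lo \<one> (m \<otimes> y)" "lo (m \<otimes> y) m"
      using lo_mult_left[of "inv m" y m] lo_mult_left[of y \<one> m] y m
      unfolding sym_interval_def by auto
    then have "inv m \<otimes> (m \<otimes> y) \<in> right_invariant"
      using interval mR subgroup.m_closed[OF subgroup_right_invariant]
        subgroup.m_inv_closed[OF subgroup_right_invariant] by blast
    then show ?thesis using m yc by simp
  qed
  then have "m \<in> invariant_radii" using m unfolding invariant_radii_def by blast
  then show ?thesis
    using one_self_mem_sym_interval[OF m] unfolding invariant_core_def by blast
qed

lemma trivial_soul_imp_small_non_right_invariant:
  assumes soul: "is_conradian_soul G lo {\<one>}" and m: "m \<in> carrier G" "strict lo \<one> m"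
  obtains x where "lo \<one> x" "lo x m" "x \<notin> right_invariant"
proof (rule ccontr)
  assume "\<not> thesis"
  then have "m \<in> invariant_core"
    using mem_invariant_core_if_interval_right_invariant[of m] that m unfolding strict_def by blast
  moreover have "invariant_core \<subseteq> {\<one>}"
    using soul convex_subgroup_invariant_core
      conradian_on_right_invariant[OF invariant_core_subset_right_invariant]
    unfolding is_conradian_soul_def by blast
  ultimately show False using m unfolding strict_def by blast
qed

subsection \<open>Approximation by conjugates\<close>

lemma exists_strict_positive:
  assumes "carrier G \<noteq> {\<one>}"
  obtains m where "m \<in> carrier G" "strict lo \<one> m"
proof -
  obtain a where a: "a \<in> carrier G" "a \<noteq> \<one>" using assms one_closed by blast
  then have "lo \<one> a \<or> lo \<one> (inv a)"
    using lo_total[of \<one> a] one_le_iff_inv_le_one[of "inv a"] by auto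
  moreover have "inv a \<noteq> \<one>" using a by simp
  ultimately show ?thesis using that a unfolding strict_def by (metis inv_closed)
qed

lemma exists_strict_positive_lower_bound:
  assumes "finite T" "T \<subseteq> carrier G" and m0: "m0 \<in> carrier G" "strict lo \<one> m0"
  shows "\<exists>m\<in>carrier G. strict lo \<one> m \<and> (\<forall>t\<in>T. strict lo \<one> t \<longrightarrow> lo m t)"
  using assms(1,2)
proof (induction T rule: finite_induct)
  case empty
  with m0 show ?case by blast
next
  case (insert t T)
  then obtain m where m: "m \<in> carrier G" "strict lo \<one> m" "\<forall>t\<in>T. strict lo \<one> t \<longrightarrow> lo m t"
    by auto
  have t: "t \<in> carrier G" using insert.prems by blast
  show ?case
  proof (cases "strict lo \<one> t \<and> lo t m")
    case True
    with m t lo_refl show ?thesis by (blast intro: lo_trans)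
  next
    case False
    with m t lo_total[of m t] show ?thesis by blast
  qed
qed

lemma one_le_iff_le_mult_right:
  assumes s: "s \<in> carrier G" and x: "x \<in> carrier G" "lo \<one> x"
    and pos: "strict lo \<one> s \<Longrightarrow> lo x s" and neg: "strict lo \<one> (inv s) \<Longrightarrow> lo x (inv s)"
  shows "lo \<one> s \<longleftrightarrow> lo x (s \<otimes> x)"
proof -
  have above: "lo x (t \<otimes> x)" if "t \<in> carrier G" "lo x t" for t
  proof -
    have "lo t (t \<otimes> x)" using lo_mult_left[OF x(2) that(1)] that(1) by simp
    with that(2) show ?thesis by (rule lo_trans)
  qed
  consider "s = \<one>" | "strict lo \<one> s" | "strict lo \<one> (inv s)"
    using lo_total[of \<one> s] one_le_iff_inv_le_one[of "inv s"] s inv_eq_1_iff[OF s]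
    unfolding strict_def by fastforce
  then show ?thesis
  proof cases
    case 1
    then show ?thesis using x lo_refl by simp
  next
    case 2
    then show ?thesis using above[OF s pos] unfolding strict_def by blast
  next
    case 3
    have "lo x (inv s \<otimes> x)"
      using above[OF inv_closed[OF s] neg[OF 3]] .
    moreover have "inv s \<otimes> x \<noteq> x"
      using 3 s x unfolding strict_def by auto
    ultimately have "\<not> lo (inv s \<otimes> x) x"
      using lo_antisym by blast
    then have "\<not> lo x (s \<otimes> x)"
      using lo_mult_left_iff[of "inv s" x "s \<otimes> x"] s x by simp
    moreover have "\<not> lo \<one> s"
      using 3 one_le_iff_inv_le_one[OF s] lo_strict_iff by blast
    ultimately show ?thesis by blast
  qed
qed

lemma conj_ord_inv_agree_on:
  assumes F: "F \<subseteq> carrier G" and x: "x \<in> carrier G" "lo \<one> x"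
    and small: "\<And>a b. a \<in> F \<Longrightarrow> b \<in> F \<Longrightarrow> strict lo \<one> (inv a \<otimes> b) \<Longrightarrow> lo x (inv a \<otimes> b)"
  shows "agree_on F lo (conj_ord G lo (inv x))"
  unfolding agree_on_def
proof (intro ballI)
  fix a b assume ab: "a \<in> F" "b \<in> F"
  then have c: "a \<in> carrier G" "b \<in> carrier G" using F by auto
  have "inv (inv a \<otimes> b) = inv b \<otimes> a"
    using c by (simp add: inv_mult_group)
  then have "lo \<one> (inv a \<otimes> b) \<longleftrightarrow> lo x (inv a \<otimes> b \<otimes> x)"
    using one_le_iff_le_mult_right[of "inv a \<otimes> b"] small ab c x by simp
  then show "lo a b \<longleftrightarrow> conj_ord G lo (inv x) a b"
    using lo_iff_one_le_inv_mult conj_ord_inv_iff x c by blast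
qed

theorem accumulation_point_conjugates:
  assumes soul: "is_conradian_soul G lo {\<one>}" and nontrivial: "carrier G \<noteq> {\<one>}"
  shows "accumulation_point G lo {conj_ord G lo h | h. h \<in> carrier G}"
  unfolding accumulation_point_def
proof (intro allI impI)
  fix F assume F: "finite F \<and> F \<subseteq> carrier G"
  define T where "T = (\<lambda>(a, b). inv a \<otimes> b) ` (F \<times> F)"
  have "finite T" "T \<subseteq> carrier G" using F unfolding T_def by auto
  obtain m0 where "m0 \<in> carrier G" "strict lo \<one> m0"
    using exists_strict_positive[OF nontrivial] .
  then obtain m where m: "m \<in> carrier G" "strict lo \<one> m" "\<forall>t\<in>T. strict lo \<one> t \<longrightarrow> lo m t"
    using exists_strict_positive_lower_bound[OF \<open>finite T\<close> \<open>T \<subseteq> carrier G\<close>] by blast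
  obtain x where x: "lo \<one> x" "lo x m" "x \<notin> right_invariant"
    using trivial_soul_imp_small_non_right_invariant[OF soul m(1,2)] by blast
  have xc: "x \<in> carrier G" using x lo_carrier by blast
  have "agree_on F lo (conj_ord G lo (inv x))"
    using conj_ord_inv_agree_on[of F x] F xc x(1) lo_trans[OF x(2)] m(3) unfolding T_def by force
  moreover have "conj_ord G lo (inv x) \<noteq> lo"
    using conj_ord_inv_eq_imp_right_invariant xc x(3) by blast
  ultimately show "\<exists>lo'\<in>{conj_ord G lo h | h. h \<in> carrier G}. lo' \<noteq> lo \<and> agree_on F lo lo'"
    using xc by blast
qed

end

theorem mainTheorem8:
  assumes "group G"
    and "carrier G \<noteq> {\<one>\<^bsub>G\<^esub>}"
    and "left_ordering G lo"
    and "is_conradian_soul G lo {\<one>\<^bsub>G\<^esub>}"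
  shows "accumulation_point G lo {conj_ord G lo h | h. h \<in> carrier G}"
proof -
  interpret left_ordered_group G lo
    using assms(1,3) by (simp add: left_ordered_group_def left_ordered_group_axioms_def)
  show ?thesis using accumulation_point_conjugates assms(2,4) by blast
qed

end
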